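(* Let $V$ be a vector space of dimension $2r$ ($r\ge1$) over $\mathbb{F}_2$ with nondegenerate quadratic form $Q$. Then $V$ has a symmetric basis if and only if either $Q$ is hyperbolic and $r\equiv 0$ or $1\pmod 4$, or $Q$ is elliptic and $r\equiv 2$ or $3\pmod 4$.
   Context: The associated bilinear form of $Q$ is $B(u,v)=Q(u+v)-Q(u)-Q(v)$, and $Q$ is nondegenerate if $B$ is. $Q$ is hyperbolic if $V$ has a basis $e_1,\dots,e_r,f_1,\dots,f_r$ with $Q(e_i)=Q(f_i)=0$, $B(e_i,e_j)=B(f_i,f_j)=0$, $B(e_i,f_j)=\delta_{ij}$; it is elliptic if $V$ has a basis $e_1,\dots,e_{r-1},f_1,\dots,f_{r-1},x,y$ with the same relations among the $e_i,f_i$, all $e_i,f_i$ orthogonal to $x,y$, $Q(x)=Q(y)=1$, $B(x,y)=1$. A basis $\{v_1,\dots,v_{2r}\}$ is symmetric if $Q(v_i)=0$ for all $i$ and $B(v_i,v_j)=1$ for all $i\ne j$. *)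

theory Defs
  imports Complex_Main "HOL-Library.Z2"
begin

text \<open>Vector spaces over F_2 are modelled by an abelian group type 'v together with a
  scalar multiplication scale :: bit => 'v => 'v satisfying the locale vector_space
  (type bit from HOL-Library.Z2 is the field with two elements).\<close>

definition polar :: "('v::ab_group_add \<Rightarrow> bit) \<Rightarrow> 'v \<Rightarrow> 'v \<Rightarrow> bit" where
  "polar Q u v = Q (u + v) - Q u - Q v"

definition is_quadratic_form :: "(bit \<Rightarrow> 'v::ab_group_add \<Rightarrow> 'v) \<Rightarrow> ('v \<Rightarrow> bit) \<Rightarrow> bool" where
  "is_quadratic_form scale Q \<longleftrightarrow>
     (\<forall>a v. Q (scale a v) = a^2 * Q v) \<and>
     (\<forall>u v w. polar Q (u + v) w = polar Q u w + polar Q v w) \<and>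
     (\<forall>a u w. polar Q (scale a u) w = a * polar Q u w)"

definition nondegenerate :: "('v::ab_group_add \<Rightarrow> bit) \<Rightarrow> bool" where
  "nondegenerate Q \<longleftrightarrow> (\<forall>u. (\<forall>v. polar Q u v = 0) \<longrightarrow> u = 0)"

definition basis_family :: "(bit \<Rightarrow> 'v::ab_group_add \<Rightarrow> 'v) \<Rightarrow> (nat \<Rightarrow> 'v) \<Rightarrow> nat \<Rightarrow> bool" where
  "basis_family scale g n \<longleftrightarrow>
     inj_on g {..<n} \<and> \<not> module.dependent scale (g ` {..<n}) \<and>
     module.span scale (g ` {..<n}) = UNIV"

definition hyperbolic :: "(bit \<Rightarrow> 'v::ab_group_add \<Rightarrow> 'v) \<Rightarrow> ('v \<Rightarrow> bit) \<Rightarrow> nat \<Rightarrow> bool" where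
  "hyperbolic scale Q r \<longleftrightarrow> (\<exists>e f :: nat \<Rightarrow> 'v.
     basis_family scale (\<lambda>i. if i < r then e i else f (i - r)) (2 * r) \<and>
     (\<forall>i<r. Q (e i) = 0 \<and> Q (f i) = 0) \<and>
     (\<forall>i<r. \<forall>j<r. polar Q (e i) (e j) = 0 \<and> polar Q (f i) (f j) = 0 \<and>
                   polar Q (e i) (f j) = (if i = j then 1 else 0)))"

definition elliptic :: "(bit \<Rightarrow> 'v::ab_group_add \<Rightarrow> 'v) \<Rightarrow> ('v \<Rightarrow> bit) \<Rightarrow> nat \<Rightarrow> bool" where
  "elliptic scale Q r \<longleftrightarrow> (\<exists>(e :: nat \<Rightarrow> 'v) f x y.
     basis_family scale
       (\<lambda>i. if i < r - 1 then e i else if i < 2 * (r - 1) then f (i - (r - 1))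
            else if i = 2 * (r - 1) then x else y) (2 * r) \<and>
     (\<forall>i<r-1. Q (e i) = 0 \<and> Q (f i) = 0) \<and>
     (\<forall>i<r-1. \<forall>j<r-1. polar Q (e i) (e j) = 0 \<and> polar Q (f i) (f j) = 0 \<and>
                   polar Q (e i) (f j) = (if i = j then 1 else 0)) \<and>
     (\<forall>i<r-1. polar Q (e i) x = 0 \<and> polar Q (e i) y = 0 \<and>
              polar Q (f i) x = 0 \<and> polar Q (f i) y = 0) \<and>
     Q x = 1 \<and> Q y = 1 \<and> polar Q x y = 1)"

definition has_symmetric_basis :: "(bit \<Rightarrow> 'v::ab_group_add \<Rightarrow> 'v) \<Rightarrow> ('v \<Rightarrow> bit) \<Rightarrow> nat \<Rightarrow> bool" where
  "has_symmetric_basis scale Q r \<longleftrightarrow> (\<exists>v :: nat \<Rightarrow> 'v.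
     basis_family scale v (2 * r) \<and>
     (\<forall>i<2*r. Q (v i) = 0) \<and>
     (\<forall>i<2*r. \<forall>j<2*r. i \<noteq> j \<longrightarrow> polar Q (v i) (v j) = 1))"

end

(*
  Call a plane spanned by a pair p, q with B p q = 1 and Q p = Q q = c hyperbolic if c = 0
  and anisotropic if c = 1. A symmetric basis v_0, ..., v_{2r-1} and a decomposition of V into
  r orthogonal such planes whose types alternate 0, 1, 0, 1, ... determine each other by the same
  unitriangular change of basis v_u \<mapsto> v_u + \<Sum>_{i < 2 \<lfloor>u/2\<rfloor>} v_i. Two orthogonal planes of
  equal type c are also the orthogonal sum of two planes of type c + 1, so the two anisotropic
  planes in each block of four consecutive planes can be made hyperbolic; among the remaining
  r mod 4 planes there is one anisotropic plane exactly when r mod 4 is 2 or 3.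
  What is left is a hyperbolic, respectively elliptic, basis.
*)

theory Submission
  imports Defs
begin

lemma bit_add_self [simp]: "(a::bit) + a = 0"
  by (cases a) simp_all

lemma bit_of_bool_add: "of_bool P + of_bool R = (of_bool (P \<noteq> R) :: bit)"
  by (cases P; cases R) simp_all

lemma sum_lessThan_double_Suc:
  "(\<Sum>i<2 * Suc m. f i) = (\<Sum>i<2 * m. f i) + (f (2 * m) + f (2 * m + 1))"
  by (simp add: add.assoc)

text \<open>The change of basis between symmetric families and alternating symplectic pairs; it is
  an involution and is used in both directions.\<close>
definition pair_shift :: "(nat \<Rightarrow> 'a::comm_monoid_add) \<Rightarrow> nat \<Rightarrow> 'a" where
  "pair_shift x u = x u + (\<Sum>i<2 * (u div 2). x i)"

definition interleave :: "(nat \<Rightarrow> 'a) \<Rightarrow> (nat \<Rightarrow> 'a) \<Rightarrow> nat \<Rightarrow> 'a" where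
  "interleave p q u = (if even u then p (u div 2) else q (u div 2))"

lemma interleave_even [simp]: "interleave p q (2 * m) = p m"
  and interleave_odd [simp]: "interleave p q (Suc (2 * m)) = q m"
  by (simp_all add: interleave_def)

locale quadratic_space = vector_space scale for scale :: "bit \<Rightarrow> 'v::ab_group_add \<Rightarrow> 'v" +
  fixes Q :: "'v \<Rightarrow> bit"
  assumes quadratic_form: "is_quadratic_form scale Q"
begin

abbreviation B :: "'v \<Rightarrow> 'v \<Rightarrow> bit" where "B \<equiv> polar Q"

lemma add_self [simp]: "(u::'v) + u = 0"
proof -
  have "u + u = scale (1 + 1) u" by (simp only: scale_left_distrib scale_one)
  then show ?thesis by simp
qed

lemma Q_zero [simp]: "Q 0 = 0"
  using quadratic_form unfolding is_quadratic_form_def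
  by (metis scale_zero_left zero_power2 mult_zero_left)

lemma Q_add: "Q (u + v) = Q u + Q v + B u v"
  by (cases "Q u"; cases "Q v"; cases "Q (u + v)") (simp_all add: polar_def)

lemma polar_commute: "B u v = B v u"
  by (cases "Q u"; cases "Q v"; cases "Q (u + v)") (simp_all add: polar_def add.commute)

lemma polar_self [simp]: "B u u = 0"
  by (simp add: polar_def)

lemma polar_add_left [simp]: "B (u + v) w = B u w + B v w"
  using quadratic_form unfolding is_quadratic_form_def by blast

lemma polar_add_right [simp]: "B w (u + v) = B w u + B w v"
  by (metis polar_add_left polar_commute)

lemma polar_scale_left [simp]: "B (scale a u) w = a * B u w"
  using quadratic_form unfolding is_quadratic_form_def by blast

lemma polar_zero_left [simp]: "B 0 w = 0"
  using polar_add_left[of 0 0 w] by simp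

lemma polar_zero_right [simp]: "B w 0 = 0"
  by (metis polar_zero_left polar_commute)

lemma polar_sum_left: "finite A \<Longrightarrow> B (sum f A) w = (\<Sum>a\<in>A. B (f a) w)"
  by (induction A rule: finite_induct) auto

lemma basis_family_if_dual_vectors:
  assumes dim: "dim (UNIV::'v set) = n" and "n > 0"
    and dual: "\<And>i. i < n \<Longrightarrow> \<exists>h. \<forall>j<n. B (g j) h = of_bool (j = i)"
  shows "basis_family scale g n"
proof -
  have inj: "inj_on g {..<n}"
  proof (rule inj_onI)
    fix i j assume "i \<in> {..<n}" "j \<in> {..<n}" "g i = g j"
    with dual[of i] show "i = j" by (metis lessThan_iff of_bool_eq_iff)
  qed
  define G where "G = g ` {..<n}"
  have indep: "independent G"
  proof
    assume "dependent G"
    then obtain t u where t: "finite t" "t \<subseteq> G" and sum_zero: "(\<Sum>v\<in>t. scale (u v) v) = 0"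
      and "\<exists>v\<in>t. u v \<noteq> 0"
      unfolding dependent_explicit by blast
    then obtain i where i: "i < n" "g i \<in> t" "u (g i) \<noteq> 0"
      using G_def by blast
    obtain h where h: "\<forall>j<n. B (g j) h = of_bool (j = i)"
      using dual[OF i(1)] by blast
    have h_on_t: "B y h = of_bool (y = g i)" if y: "y \<in> t" for y
    proof -
      obtain j where "j < n" "y = g j" using y t G_def by blast
      with h i(1) inj show ?thesis by (auto simp: inj_on_def)
    qed
    have "0 = B (\<Sum>v\<in>t. scale (u v) v) h" using sum_zero by simp
    also have "\<dots> = (\<Sum>v\<in>t. u v * B v h)" using t(1) by (simp add: polar_sum_left)
    also have "\<dots> = (\<Sum>v\<in>t. if v = g i then u v else 0)"
      by (rule sum.cong) (auto simp: h_on_t)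
    also have "\<dots> = u (g i)" using t(1) i(2) by simp
    finally show False using i(3) by simp
  qed
  obtain A where A: "independent A" "UNIV \<subseteq> span A" "card A = n"
    using basis_exists[of UNIV] dim by metis
  have "finite A" using A(3) \<open>n > 0\<close> card_ge_0_finite by blast
  have "span G = UNIV"
  proof (rule ccontr)
    assume "span G \<noteq> UNIV"
    then obtain x where x: "x \<notin> span G" by auto
    have "card (insert x G) \<le> card A"
      using independent_span_bound[OF \<open>finite A\<close> independent_insertI[OF x indep]] A(2) by auto
    moreover have "x \<notin> G" using x span_base by blast
    ultimately show False using A(3) inj G_def by (simp add: card_image)
  qed
  then show ?thesis unfolding basis_family_def using inj indep G_def by simp
qed

definition symplectic_pairs :: "(nat \<Rightarrow> 'v) \<Rightarrow> (nat \<Rightarrow> 'v) \<Rightarrow> nat \<Rightarrow> bool" where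
  "symplectic_pairs p q r \<longleftrightarrow> (\<forall>m<r. \<forall>m'<r.
     B (p m) (q m') = of_bool (m = m') \<and> B (p m) (p m') = 0 \<and> B (q m) (q m') = 0)"

definition has_plane_types :: "(nat \<Rightarrow> bit) \<Rightarrow> nat \<Rightarrow> bool" where
  "has_plane_types c r \<longleftrightarrow>
     (\<exists>p q. symplectic_pairs p q r \<and> (\<forall>m<r. Q (p m) = c m \<and> Q (q m) = c m))"

lemma symplectic_pairsD:
  assumes "symplectic_pairs p q r" "a < r" "b < r"
  shows "B (p a) (q b) = of_bool (a = b)" "B (q b) (p a) = of_bool (a = b)"
    and "B (p a) (p b) = 0" "B (q a) (q b) = 0"
  using assms polar_commute unfolding symplectic_pairs_def by metis+

lemma symplectic_pairs_basis_family:
  assumes pairs: "symplectic_pairs p q r" and dim: "dim (UNIV::'v set) = n" and "n > 0"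
    and k: "\<And>j. j < n \<Longrightarrow> k j < r"
    and inj: "\<And>i j. i < n \<Longrightarrow> j < n \<Longrightarrow> k i = k j \<Longrightarrow> s i = s j \<Longrightarrow> i = j"
  shows "basis_family scale (\<lambda>j. if s j then p (k j) else q (k j)) n"
proof (rule basis_family_if_dual_vectors[OF dim \<open>n > 0\<close>])
  fix i assume "i < n"
  show "\<exists>h. \<forall>j<n. B (if s j then p (k j) else q (k j)) h = of_bool (j = i)"
  proof (intro exI allI impI)
    fix j assume "j < n"
    then have "(j = i) = (k j = k i \<and> s j = s i)" using inj \<open>i < n\<close> by auto
    then show "B (if s j then p (k j) else q (k j)) (if s i then q (k i) else p (k i)) =
        of_bool (j = i)"
      using symplectic_pairsD[OF pairs] k \<open>i < n\<close> \<open>j < n\<close>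
      by (cases "s i"; cases "s j") auto
  qed
qed

context
  fixes x :: "nat \<Rightarrow> 'v" and r :: nat
  assumes polar_pair: "\<And>k j. k < 2 * r \<Longrightarrow> j < r \<Longrightarrow>
      B (x k) (x (2 * j) + x (2 * j + 1)) = of_bool (k div 2 = j)"
    and Q_pair: "\<And>j. j < r \<Longrightarrow> Q (x (2 * j) + x (2 * j + 1)) = 1"
begin

lemma polar_partial_sum:
  "k < 2 * r \<Longrightarrow> m \<le> r \<Longrightarrow> B (x k) (\<Sum>i<2 * m. x i) = of_bool (k < 2 * m)"
proof (induction m)
  case (Suc m)
  have "B (x k) (\<Sum>i<2 * Suc m. x i) =
      B (x k) (\<Sum>i<2 * m. x i) + B (x k) (x (2 * m) + x (2 * m + 1))"
    by (simp only: sum_lessThan_double_Suc polar_add_right)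
  also have "\<dots> = of_bool (k < 2 * m) + of_bool (k div 2 = m)"
    using Suc polar_pair[of k m] by (simp only: Suc_le_lessD Suc_leD)
  also have "\<dots> = of_bool (k < 2 * Suc m)"
    by (auto simp: bit_of_bool_add)
  finally show ?case .
qed simp

lemma partial_sums_orthogonal:
  "m \<le> r \<Longrightarrow> m' \<le> r \<Longrightarrow> B (\<Sum>i<2 * m. x i) (\<Sum>i<2 * m'. x i) = 0"
proof (induction m)
  case (Suc m)
  have "2 * m + 1 < 2 * m' \<longleftrightarrow> 2 * m < 2 * m'" by arith
  then show ?case
    using Suc polar_partial_sum[of "2 * m" m'] polar_partial_sum[of "2 * m + 1" m']
    by (simp add: sum_lessThan_double_Suc)
qed simp

lemma Q_partial_sum: "m \<le> r \<Longrightarrow> Q (\<Sum>i<2 * m. x i) = of_bool (odd m)"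
proof (induction m)
  case (Suc m)
  have "B (\<Sum>i<2 * m. x i) (x (2 * m) + x (2 * m + 1)) = 0"
    using Suc.prems polar_partial_sum[of "2 * m" m] polar_partial_sum[of "2 * m + 1" m]
    by (simp add: polar_commute[of "sum x _"])
  then have "Q (\<Sum>i<2 * Suc m. x i) = Q (\<Sum>i<2 * m. x i) + Q (x (2 * m) + x (2 * m + 1))"
    by (simp only: sum_lessThan_double_Suc Q_add add_0_right)
  also have "\<dots> = of_bool (odd (Suc m))"
    using Suc Q_pair[of m] by (cases "odd m") simp_all
  finally show ?case .
qed simp

lemma polar_pair_shift:
  assumes "u < 2 * r" "u' < 2 * r"
  shows "B (pair_shift x u) (pair_shift x u') = B (x u) (x u') + of_bool (u div 2 \<noteq> u' div 2)"
proof -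
  let ?S = "\<Sum>i<2 * (u div 2). x i" and ?S' = "\<Sum>i<2 * (u' div 2). x i"
  have "u div 2 \<le> r" "u' div 2 \<le> r" using assms by auto
  then have "B (pair_shift x u) (pair_shift x u') =
      B (x u) (x u') + B (x u') ?S + (B (x u) ?S' + B ?S ?S')"
    by (simp only: pair_shift_def polar_add_left polar_add_right polar_commute[of ?S "x u'"]
        add.assoc)
  also have "\<dots> = B (x u) (x u') + (of_bool (u' < 2 * (u div 2)) + of_bool (u < 2 * (u' div 2)))"
    using assms \<open>u div 2 \<le> r\<close> \<open>u' div 2 \<le> r\<close> polar_partial_sum[of u "u' div 2"]
      polar_partial_sum[of u' "u div 2"] partial_sums_orthogonal[of "u div 2" "u' div 2"]
    by (simp only: add_0_right add.assoc)
  also have "of_bool (u' < 2 * (u div 2)) + of_bool (u < 2 * (u' div 2)) =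
      (of_bool (u div 2 \<noteq> u' div 2) :: bit)"
    by (auto simp: bit_of_bool_add)
  finally show ?thesis .
qed

lemma Q_pair_shift:
  assumes "u < 2 * r"
  shows "Q (pair_shift x u) = Q (x u) + of_bool (odd (u div 2))"
proof -
  have "B (x u) (\<Sum>i<2 * (u div 2). x i) = 0"
    using assms polar_partial_sum[of u "u div 2"] by simp
  then show ?thesis
    using assms Q_partial_sum[of "u div 2"] by (simp only: pair_shift_def Q_add) simp
qed

end

definition symmetric_family :: "(nat \<Rightarrow> 'v) \<Rightarrow> nat \<Rightarrow> bool" where
  "symmetric_family v n \<longleftrightarrow>
     (\<forall>i<n. Q (v i) = 0) \<and> (\<forall>i<n. \<forall>j<n. i \<noteq> j \<longrightarrow> B (v i) (v j) = 1)"

lemma symmetric_family_polar: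
  "symmetric_family v n \<Longrightarrow> i < n \<Longrightarrow> j < n \<Longrightarrow> B (v i) (v j) = of_bool (i \<noteq> j)"
  unfolding symmetric_family_def by auto

lemma symmetric_family_polar_pair:
  assumes "symmetric_family v (2 * r)" "k < 2 * r" "j < r"
  shows "B (v k) (v (2 * j) + v (2 * j + 1)) = of_bool (k div 2 = j)"
proof -
  have "(k \<noteq> 2 * j) \<noteq> (k \<noteq> 2 * j + 1) \<longleftrightarrow> k div 2 = j" by auto
  then show ?thesis
    using assms by (simp only: polar_add_right symmetric_family_polar bit_of_bool_add)
qed

lemma symmetric_family_Q_pair:
  "symmetric_family v (2 * r) \<Longrightarrow> j < r \<Longrightarrow> Q (v (2 * j) + v (2 * j + 1)) = 1"
  unfolding symmetric_family_def by (simp add: Q_add)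

lemma symplectic_pairs_interleave_polar:
  assumes "symplectic_pairs p q r" "u < 2 * r" "u' < 2 * r"
  shows "B (interleave p q u) (interleave p q u') = of_bool (u div 2 = u' div 2 \<and> u \<noteq> u')"
proof -
  have "u div 2 < r" "u' div 2 < r" using assms by auto
  moreover have "u \<noteq> u' \<longleftrightarrow> even u \<noteq> even u'" if "u div 2 = u' div 2"
    using that by (metis div_mult_mod_eq mod2_eq_if)
  ultimately show ?thesis
    using symplectic_pairsD[OF assms(1)] by (auto simp: interleave_def)
qed

lemma symplectic_pairs_interleave_polar_pair:
  assumes "symplectic_pairs p q r" "k < 2 * r" "j < r"
  shows "B (interleave p q k) (interleave p q (2 * j) + interleave p q (2 * j + 1)) =
    of_bool (k div 2 = j)"
proof -
  have "(k div 2 = j \<and> k \<noteq> 2 * j) \<noteq> (k div 2 = j \<and> k \<noteq> 2 * j + 1) \<longleftrightarrow> k div 2 = j" by auto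
  then show ?thesis
    using assms symplectic_pairs_interleave_polar[OF assms(1), of k]
    by (simp only: polar_add_right bit_of_bool_add) simp
qed

lemma symplectic_pairs_interleave_Q_pair:
  "symplectic_pairs p q r \<Longrightarrow> \<forall>m<r. Q (p m) = c m \<and> Q (q m) = c m \<Longrightarrow> j < r \<Longrightarrow>
    Q (interleave p q (2 * j) + interleave p q (2 * j + 1)) = 1"
  by (simp add: Q_add symplectic_pairsD)

lemma symmetric_family_imp_has_plane_types:
  assumes "symmetric_family v (2 * r)"
  shows "has_plane_types (\<lambda>m. of_bool (odd m)) r"
proof -
  note shift =
    polar_pair_shift[OF symmetric_family_polar_pair[OF assms] symmetric_family_Q_pair[OF assms]]
    Q_pair_shift[OF symmetric_family_polar_pair[OF assms] symmetric_family_Q_pair[OF assms]]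
  have "symplectic_pairs (\<lambda>m. pair_shift v (2 * m)) (\<lambda>m. pair_shift v (2 * m + 1)) r"
    unfolding symplectic_pairs_def using assms by (auto simp: shift symmetric_family_polar)
  moreover have "\<forall>m<r. Q (pair_shift v (2 * m)) = of_bool (odd m) \<and>
      Q (pair_shift v (2 * m + 1)) = of_bool (odd m)"
    using assms by (auto simp: shift symmetric_family_def)
  ultimately show ?thesis unfolding has_plane_types_def by blast
qed

lemma has_plane_types_imp_symmetric_family:
  assumes "has_plane_types (\<lambda>m. of_bool (odd m)) r"
  shows "\<exists>v. symmetric_family v (2 * r)"
proof -
  obtain p q where pairs: "symplectic_pairs p q r"
    and types: "\<forall>m<r. Q (p m) = of_bool (odd m) \<and> Q (q m) = of_bool (odd m)"
    using assms unfolding has_plane_types_def by blast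
  note shift = polar_pair_shift[OF symplectic_pairs_interleave_polar_pair[OF pairs]
      symplectic_pairs_interleave_Q_pair[OF pairs types]]
    Q_pair_shift[OF symplectic_pairs_interleave_polar_pair[OF pairs]
      symplectic_pairs_interleave_Q_pair[OF pairs types]]
  have "Q (interleave p q u) = of_bool (odd (u div 2))" if "u < 2 * r" for u
    using types that by (auto simp: interleave_def)
  then have "symmetric_family (pair_shift (interleave p q)) (2 * r)"
    unfolding symmetric_family_def
    by (auto simp: shift symplectic_pairs_interleave_polar[OF pairs] bit_of_bool_add)
  then show ?thesis by blast
qed

lemma symmetric_family_basis_family:
  assumes sym: "symmetric_family v (2 * r)" and dim: "dim (UNIV::'v set) = 2 * r" and "r \<ge> 1"
  shows "basis_family scale v (2 * r)"
proof (rule basis_family_if_dual_vectors[OF dim])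
  show "2 * r > 0" using \<open>r \<ge> 1\<close> by simp
  fix i assume "i < 2 * r"
  have "B (v j) (v i + (\<Sum>k<2 * r. v k)) = of_bool (j = i)" if "j < 2 * r" for j
    using that \<open>i < 2 * r\<close> symmetric_family_polar[OF sym]
      polar_partial_sum[OF symmetric_family_polar_pair[OF sym] symmetric_family_Q_pair[OF sym],
        where k = j and m = r]
    by (cases "j = i") simp_all
  then show "\<exists>h. \<forall>j<2 * r. B (v j) h = of_bool (j = i)" by blast
qed

lemma has_symmetric_basis_iff_plane_types:
  assumes "dim (UNIV::'v set) = 2 * r" "r \<ge> 1"
  shows "has_symmetric_basis scale Q r \<longleftrightarrow> has_plane_types (\<lambda>m. of_bool (odd m)) r"
proof
  assume "has_symmetric_basis scale Q r"
  then obtain v where "symmetric_family v (2 * r)"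
    unfolding has_symmetric_basis_def symmetric_family_def by blast
  then show "has_plane_types (\<lambda>m. of_bool (odd m)) r" by (rule symmetric_family_imp_has_plane_types)
next
  assume "has_plane_types (\<lambda>m. of_bool (odd m)) r"
  then obtain v where "symmetric_family v (2 * r)"
    using has_plane_types_imp_symmetric_family by blast
  with symmetric_family_basis_family[OF this assms] show "has_symmetric_basis scale Q r"
    unfolding has_symmetric_basis_def symmetric_family_def by blast
qed

lemma hyperbolic_iff_plane_types:
  assumes dim: "dim (UNIV::'v set) = 2 * r" and "r \<ge> 1"
  shows "hyperbolic scale Q r \<longleftrightarrow> has_plane_types (\<lambda>_. 0) r"
proof
  assume "hyperbolic scale Q r"
  then obtain e f where "symplectic_pairs e f r" "\<forall>i<r. Q (e i) = 0 \<and> Q (f i) = 0"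
    unfolding hyperbolic_def symplectic_pairs_def of_bool_def by (metis (no_types, lifting))
  then show "has_plane_types (\<lambda>_. 0) r" unfolding has_plane_types_def by blast
next
  assume "has_plane_types (\<lambda>_. 0) r"
  then obtain p q where pairs: "symplectic_pairs p q r" and "\<forall>m<r. Q (p m) = 0 \<and> Q (q m) = 0"
    unfolding has_plane_types_def by blast
  moreover have "basis_family scale (\<lambda>i. if i < r then p i else q (i - r)) (2 * r)"
  proof -
    have "basis_family scale (\<lambda>i. if i < r then p (if i < r then i else i - r)
        else q (if i < r then i else i - r)) (2 * r)"
      by (rule symplectic_pairs_basis_family[OF pairs dim]) (use \<open>r \<ge> 1\<close> in auto)
    moreover have "(\<lambda>i. if i < r then p (if i < r then i else i - r)
        else q (if i < r then i else i - r)) =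
        (\<lambda>i. if i < r then p i else q (i - r))"
      by auto
    ultimately show ?thesis by simp
  qed
  ultimately show "hyperbolic scale Q r"
    unfolding hyperbolic_def using symplectic_pairsD[OF pairs, unfolded of_bool_def] by blast
qed

lemma elliptic_iff_plane_types:
  assumes dim: "dim (UNIV::'v set) = 2 * r" and "r \<ge> 1"
  shows "elliptic scale Q r \<longleftrightarrow> has_plane_types (\<lambda>m. of_bool (m = r - 1)) r"
proof
  assume "elliptic scale Q r"
  then obtain e f x y where
    Q_ef: "\<forall>i<r-1. Q (e i) = 0 \<and> Q (f i) = 0" and
    B_ef: "\<forall>i<r-1. \<forall>j<r-1. B (e i) (e j) = 0 \<and> B (f i) (f j) = 0 \<and>
                   B (e i) (f j) = (if i = j then 1 else 0)" and
    B_xy: "\<forall>i<r-1. B (e i) x = 0 \<and> B (e i) y = 0 \<and> B (f i) x = 0 \<and> B (f i) y = 0"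
      "Q x = 1" "Q y = 1" "B x y = 1"
    unfolding elliptic_def by blast
  define p where "p m = (if m < r - 1 then e m else x)" for m
  define q where "q m = (if m < r - 1 then f m else y)" for m
  have "symplectic_pairs p q r"
    unfolding symplectic_pairs_def
  proof (intro allI impI)
    fix m m' assume "m < r" "m' < r"
    then consider "m < r - 1" "m' < r - 1" | "m < r - 1" "m' = r - 1" | "m = r - 1" "m' < r - 1"
      | "m = r - 1" "m' = r - 1"
      by linarith
    then show "B (p m) (q m') = of_bool (m = m') \<and> B (p m) (p m') = 0 \<and> B (q m) (q m') = 0"
      by cases (use B_ef B_xy polar_commute in \<open>auto simp: p_def q_def\<close>)
  qed
  moreover have "\<forall>m<r. Q (p m) = of_bool (m = r - 1) \<and> Q (q m) = of_bool (m = r - 1)"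
    using Q_ef B_xy unfolding p_def q_def by auto
  ultimately show "has_plane_types (\<lambda>m. of_bool (m = r - 1)) r"
    unfolding has_plane_types_def by blast
next
  assume "has_plane_types (\<lambda>m. of_bool (m = r - 1)) r"
  then obtain p q where pairs: "symplectic_pairs p q r"
    and types: "\<forall>m<r. Q (p m) = of_bool (m = r - 1) \<and> Q (q m) = of_bool (m = r - 1)"
    unfolding has_plane_types_def by blast
  define k where
    "k j = (if j < r - 1 then j else if j < 2 * (r - 1) then j - (r - 1) else r - 1)" for j
  define s where "s j = (j < r - 1 \<or> j = 2 * (r - 1))" for j
  have "basis_family scale (\<lambda>j. if s j then p (k j) else q (k j)) (2 * r)"
    by (rule symplectic_pairs_basis_family[OF pairs dim])
      (use \<open>r \<ge> 1\<close> in \<open>auto simp: s_def k_def split: if_splits\<close>)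
  moreover have "(\<lambda>j. if s j then p (k j) else q (k j)) =
      (\<lambda>i. if i < r - 1 then p i else if i < 2 * (r - 1) then q (i - (r - 1))
         else if i = 2 * (r - 1) then p (r - 1) else q (r - 1))"
    unfolding s_def k_def by auto
  ultimately show "elliptic scale Q r"
    unfolding elliptic_def
    using types \<open>r \<ge> 1\<close> symplectic_pairsD[OF pairs, unfolded of_bool_def]
    by (intro exI[of _ p] exI[of _ q] exI[of _ "p (r - 1)"] exI[of _ "q (r - 1)"]) auto
qed

lemma has_plane_types_cong:
  "(\<And>m. m < r \<Longrightarrow> c m = d m) \<Longrightarrow> has_plane_types c r \<longleftrightarrow> has_plane_types d r"
  unfolding has_plane_types_def by auto

lemma has_plane_types_reindex:
  assumes "has_plane_types c r" "\<sigma> ` {..<r} \<subseteq> {..<r}" "inj_on \<sigma> {..<r}"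
  shows "has_plane_types (c \<circ> \<sigma>) r"
proof -
  obtain p q where pairs: "symplectic_pairs p q r" and types: "\<forall>m<r. Q (p m) = c m \<and> Q (q m) = c m"
    using assms(1) unfolding has_plane_types_def by blast
  have "symplectic_pairs (p \<circ> \<sigma>) (q \<circ> \<sigma>) r"
    unfolding symplectic_pairs_def using symplectic_pairsD[OF pairs] assms(2,3)
    by (auto simp: inj_on_def subset_eq)
  moreover have "\<forall>m<r. Q ((p \<circ> \<sigma>) m) = (c \<circ> \<sigma>) m \<and> Q ((q \<circ> \<sigma>) m) = (c \<circ> \<sigma>) m"
    using types assms(2) by auto
  ultimately show ?thesis unfolding has_plane_types_def by blast
qed

text \<open>The new pairs realise the classical isometry between the orthogonal sum of two hyperbolic
  planes and that of two anisotropic ones.\<close>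
lemma has_plane_types_flip:
  assumes "has_plane_types c r" "i < r" "j < r" "i \<noteq> j" "c i = c j"
  shows "has_plane_types (c(i := c i + 1, j := c j + 1)) r"
proof -
  obtain p q where pairs: "symplectic_pairs p q r" and types: "\<forall>m<r. Q (p m) = c m \<and> Q (q m) = c m"
    using assms(1) unfolding has_plane_types_def by blast
  note D = symplectic_pairsD[OF pairs]
  define p' where "p' = p(i := q i + p j + q j, j := p i + q i + q j)"
  define q' where "q' = q(i := p i + p j + q j, j := p i + q i + p j)"
  have "symplectic_pairs p' q' r"
    unfolding symplectic_pairs_def
  proof (intro allI impI)
    fix m m' assume "m < r" "m' < r"
    then show "B (p' m) (q' m') = of_bool (m = m') \<and> B (p' m) (p' m') = 0 \<and> B (q' m) (q' m') = 0"
      using assms(2-4) unfolding p'_def q'_def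
      by (cases "m = i"; cases "m = j"; cases "m' = i"; cases "m' = j") (simp_all add: D)
  qed
  moreover have "\<forall>m<r. Q (p' m) = (c(i := c i + 1, j := c j + 1)) m \<and>
      Q (q' m) = (c(i := c i + 1, j := c j + 1)) m"
  proof (intro allI impI)
    fix m assume "m < r"
    then show "Q (p' m) = (c(i := c i + 1, j := c j + 1)) m \<and>
        Q (q' m) = (c(i := c i + 1, j := c j + 1)) m"
      using assms(2-5) types unfolding p'_def q'_def
      by (cases "m = i"; cases "m = j"; cases "c i") (simp_all add: D Q_add)
  qed
  ultimately show ?thesis unfolding has_plane_types_def by blast
qed

lemma has_plane_types_odd_iff:
  "4 * K \<le> r \<Longrightarrow> has_plane_types (\<lambda>m. of_bool (odd m)) r \<longleftrightarrow>
    has_plane_types (\<lambda>m. of_bool (4 * K \<le> m \<and> odd m)) r"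
proof (induction K)
  case (Suc K)
  let ?c = "\<lambda>m. of_bool (4 * K \<le> m \<and> odd m) :: bit"
  let ?d = "\<lambda>m. of_bool (4 * Suc K \<le> m \<and> odd m) :: bit"
  have "4 * K + 1 < r" "4 * K + 3 < r" using Suc.prems by auto
  moreover have "?c(4 * K + 1 := ?c (4 * K + 1) + 1, 4 * K + 3 := ?c (4 * K + 3) + 1) = ?d"
    and "?d(4 * K + 1 := ?d (4 * K + 1) + 1, 4 * K + 3 := ?d (4 * K + 3) + 1) = ?c"
    by (auto simp: fun_eq_iff) presburger+
  ultimately have "has_plane_types ?c r \<longleftrightarrow> has_plane_types ?d r"
    using has_plane_types_flip[of ?c r "4 * K + 1" "4 * K + 3"]
      has_plane_types_flip[of ?d r "4 * K + 1" "4 * K + 3"]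
    by auto
  with Suc show ?case by simp
qed simp

lemma has_plane_types_odd_iff_hyperbolic:
  assumes "r mod 4 = 0 \<or> r mod 4 = 1"
  shows "has_plane_types (\<lambda>m. of_bool (odd m)) r \<longleftrightarrow> has_plane_types (\<lambda>_. 0) r"
proof -
  have "\<not> (4 * (r div 4) \<le> m \<and> odd m)" if "m < r" for m
    using assms that by presburger
  then have "has_plane_types (\<lambda>m. of_bool (4 * (r div 4) \<le> m \<and> odd m)) r \<longleftrightarrow>
      has_plane_types (\<lambda>_. 0) r"
    by (intro has_plane_types_cong) simp
  then show ?thesis using has_plane_types_odd_iff[of "r div 4" r] by simp
qed

lemma has_plane_types_odd_iff_elliptic:
  assumes "r mod 4 = 2 \<or> r mod 4 = 3"
  shows "has_plane_types (\<lambda>m. of_bool (odd m)) r \<longleftrightarrow> has_plane_types (\<lambda>m. of_bool (m = r - 1)) r"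
proof -
  define K where "K = r div 4"
  have odd_iff: "has_plane_types (\<lambda>m. of_bool (odd m)) r \<longleftrightarrow>
      has_plane_types (\<lambda>m. of_bool (4 * K \<le> m \<and> odd m)) r"
    by (rule has_plane_types_odd_iff) (simp add: K_def)
  have "r = 4 * K + 2 \<or> r = 4 * K + 3"
    using assms div_mult_mod_eq[of r 4] unfolding K_def by linarith
  then show ?thesis
  proof
    assume r: "r = 4 * K + 2"
    have "4 * K \<le> m \<and> odd m \<longleftrightarrow> m = r - 1" if "m < r" for m
      using that unfolding r by presburger
    then show ?thesis unfolding odd_iff by (intro has_plane_types_cong) simp
  next
    assume r: "r = 4 * K + 3"
    \<comment> \<open>the single plane of type 1 is the second to last one, so swap the last two\<close>
    define \<sigma> where
      "\<sigma> m = (if m = 4 * K + 1 then 4 * K + 2 else if m = 4 * K + 2 then 4 * K + 1 else m)" for m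
    have \<sigma>: "\<sigma> ` {..<r} \<subseteq> {..<r}" "inj_on \<sigma> {..<r}"
      unfolding r by (auto simp: \<sigma>_def inj_on_def)
    have \<sigma>_types: "(4 * K \<le> \<sigma> m \<and> odd (\<sigma> m)) \<longleftrightarrow> m = r - 1"
      "\<sigma> m = r - 1 \<longleftrightarrow> (4 * K \<le> m \<and> odd m)" if "m < r" for m
      using that unfolding r \<sigma>_def by presburger+
    have "has_plane_types (\<lambda>m. of_bool (4 * K \<le> \<sigma> m \<and> odd (\<sigma> m))) r \<longleftrightarrow>
        has_plane_types (\<lambda>m. of_bool (m = r - 1)) r"
      by (intro has_plane_types_cong) (simp only: \<sigma>_types(1))
    moreover have "has_plane_types (\<lambda>m. of_bool (\<sigma> m = r - 1)) r \<longleftrightarrow>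
        has_plane_types (\<lambda>m. of_bool (4 * K \<le> m \<and> odd m)) r"
      by (intro has_plane_types_cong) (simp only: \<sigma>_types(2))
    ultimately show ?thesis
      unfolding odd_iff using has_plane_types_reindex[OF _ \<sigma>] by (auto simp: comp_def)
  qed
qed

end

theorem theorem3p5:
  fixes scale :: "bit \<Rightarrow> 'v::ab_group_add \<Rightarrow> 'v"
    and Q :: "'v \<Rightarrow> bit"
    and r :: nat
  assumes "vector_space scale"
    and "r \<ge> 1"
    and "vector_space.dim scale (UNIV :: 'v set) = 2 * r"
    and "is_quadratic_form scale Q"
    and "nondegenerate Q"
  shows "has_symmetric_basis scale Q r \<longleftrightarrow>
           (hyperbolic scale Q r \<and> (r mod 4 = 0 \<or> r mod 4 = 1)) \<or>
           (elliptic scale Q r \<and> (r mod 4 = 2 \<or> r mod 4 = 3))"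
proof -
  interpret quadratic_space scale Q
    using assms(1,4) by (rule quadratic_space.intro[OF _ quadratic_space_axioms.intro])
  note symmetric = has_symmetric_basis_iff_plane_types[OF assms(3,2)]
  have "r mod 4 = 0 \<or> r mod 4 = 1 \<or> r mod 4 = 2 \<or> r mod 4 = 3" by auto
  then consider "r mod 4 = 0 \<or> r mod 4 = 1" | "r mod 4 = 2 \<or> r mod 4 = 3" by blast
  then show ?thesis
  proof cases
    case 1
    then show ?thesis using symmetric hyperbolic_iff_plane_types[OF assms(3,2)]
      has_plane_types_odd_iff_hyperbolic by auto
  next
    case 2
    then show ?thesis using symmetric elliptic_iff_plane_types[OF assms(3,2)]
      has_plane_types_odd_iff_elliptic by auto
  qed
qed

end
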